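(* Let $L \subseteq \Sigma^*$ be regular and $k\ge0$. Then $L$ is a Boolean combination of at most $k$ regular left ideals if and only if $\mathrm{alt}_L(x) \le k$ for all $x \in \Sigma^*$.
   Context: A language $P\subseteq\Sigma^*$ is a left ideal if $\Sigma^*P\subseteq P$. For $x=a_1\cdots a_n\in\Sigma^*$, a position $1\le i\le n$ is an $L$-alternation point if exactly one of the words $a_i\cdots a_n$ and $a_{i+1}\cdots a_n$ belongs to $L$; $\mathrm{alt}_L(x)$ is the number of $L$-alternation points of $x$. *)

theory Defs
  imports Main
begin

text \<open>Words over the alphabet \<Sigma> are lists over a finite type 'a (\<Sigma> = UNIV).
  A language is regular if it is accepted by a deterministic finite automaton.\<close>

definition regular :: "('a::finite) list set \<Rightarrow> bool" where
  "regular L \<longleftrightarrow>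
     (\<exists>(Q::nat set) (\<delta>::nat \<Rightarrow> 'a \<Rightarrow> nat) q0 F.
        finite Q \<and> q0 \<in> Q \<and> (\<forall>q\<in>Q. \<forall>a. \<delta> q a \<in> Q) \<and> F \<subseteq> Q \<and>
        L = {w. foldl \<delta> q0 w \<in> F})"

definition left_ideal :: "'a list set \<Rightarrow> bool" where
  "left_ideal P \<longleftrightarrow> (\<forall>u w. w \<in> P \<longrightarrow> u @ w \<in> P)"

definition bool_comb :: "'a list set list \<Rightarrow> 'a list set \<Rightarrow> bool" where
  "bool_comb Ps L \<longleftrightarrow> (\<exists>f :: bool list \<Rightarrow> bool. \<forall>x. (x \<in> L) = f (map (\<lambda>P. x \<in> P) Ps))"

text \<open>Number of L-alternation points of x = a_1...a_n: positions i (1 \<le> i \<le> n) such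
  that exactly one of a_i...a_n and a_(i+1)...a_n is in L (0-based here).\<close>
definition alt :: "'a list set \<Rightarrow> 'a list \<Rightarrow> nat" where
  "alt L x = card {i. i < length x \<and> (drop i x \<in> L) \<noteq> (drop (Suc i) x \<in> L)}"

end

theory Submission imports Defs begin

text \<open>
  Suffix membership in a left ideal is monotone: once a suffix of \<open>x\<close> drops out of a left
  ideal \<open>P\<close>, every shorter suffix stays out.  Hence along \<open>x\<close> each \<open>P\<close> switches at most once,
  and if \<open>L\<close> is a Boolean combination of \<open>P\<^sub>1, \<dots>, P\<^sub>k\<close> every \<open>L\<close>-alternation point is a
  switching point of some \<open>P\<^sub>j\<close>, so \<open>alt\<^sub>L(x) \<le> k\<close>.
  Conversely, the level sets \<open>{x. j \<le> alt\<^sub>L(x)}\<close> are left ideals, since alternation points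
  of \<open>x\<close> remain alternation points of \<open>u x\<close>; membership of \<open>x\<close> in \<open>L\<close> is decided by the
  parity of \<open>alt\<^sub>L(x)\<close>, i.e. by how many of the levels \<open>1, \<dots>, k\<close> contain \<open>x\<close>.  The levels
  are regular by Myhill-Nerode: their left quotients are determined by a bounded counter
  and by which left quotients of \<open>L\<close> contain the word.
\<close>

definition alt_within :: "'a list set \<Rightarrow> 'a list \<Rightarrow> 'a list \<Rightarrow> nat" where
  "alt_within L p w =
     card {i. i < length p \<and> (drop i p @ w \<in> L) \<noteq> (drop (Suc i) p @ w \<in> L)}"

lemma alt_append: "alt L (p @ w) = alt L w + alt_within L p w"
proof -
  let ?C = "{i. i < length (p @ w) \<and> (drop i (p @ w) \<in> L) \<noteq> (drop (Suc i) (p @ w) \<in> L)}"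
  let ?P = "{i. i < length p \<and> (drop i p @ w \<in> L) \<noteq> (drop (Suc i) p @ w \<in> L)}"
  let ?W = "{i. i < length w \<and> (drop i w \<in> L) \<noteq> (drop (Suc i) w \<in> L)}"
  have split: "?C = ?P \<union> (\<lambda>i. i + length p) ` ?W"
  proof (intro set_eqI iffI)
    fix i assume i: "i \<in> ?C"
    show "i \<in> ?P \<union> (\<lambda>i. i + length p) ` ?W"
    proof (cases "i < length p")
      case False
      then have "i - length p \<in> ?W" and "i = i - length p + length p"
        using i by (auto simp: Suc_diff_le)
      then show ?thesis by blast
    qed (use i in auto)
  qed auto
  have "card ?C = card ?P + card ((\<lambda>i. i + length p) ` ?W)"
    unfolding split by (rule card_Un_disjoint) auto
  also have "card ((\<lambda>i. i + length p) ` ?W) = card ?W"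
    by (rule card_image) (auto simp: inj_on_def)
  finally show ?thesis unfolding alt_def alt_within_def by simp
qed

lemma alt_Cons: "alt L (a # x) = alt L x + (if (a # x \<in> L) \<noteq> (x \<in> L) then 1 else 0)"
proof -
  have "{i. i < length [a] \<and> (drop i [a] @ x \<in> L) \<noteq> (drop (Suc i) [a] @ x \<in> L)}
          = (if (a # x \<in> L) \<noteq> (x \<in> L) then {0} else {})"
    by auto
  then show ?thesis using alt_append[of L "[a]" x] unfolding alt_within_def by simp
qed

lemma mem_iff_odd_alt: "(x \<in> L) \<longleftrightarrow> ([] \<in> L) \<noteq> odd (alt L x)"
proof (induction x)
  case (Cons a x)
  then show ?case by (simp only: alt_Cons) auto
qed (simp add: alt_def)

lemma left_ideal_drop_mono:
  assumes "left_ideal P" "drop m x \<in> P" "i \<le> m"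
  shows "drop i x \<in> P"
proof -
  have "drop i x = take (m - i) (drop i x) @ drop m x"
    using append_take_drop_id[of "m - i" "drop i x"] assms(3) by simp
  then show ?thesis using assms(1,2) unfolding left_ideal_def by metis
qed

lemma left_ideal_exit_unique:
  assumes "left_ideal P"
    and "drop i x \<in> P" "drop (Suc i) x \<notin> P"
    and "drop i' x \<in> P" "drop (Suc i') x \<notin> P"
  shows "i = i'"
proof (rule ccontr)
  assume "i \<noteq> i'"
  then have "Suc i \<le> i' \<or> Suc i' \<le> i" by linarith
  then show False using assms left_ideal_drop_mono[OF assms(1)] by blast
qed

lemma bool_comb_separates:
  assumes "bool_comb Ps L" "(u \<in> L) \<noteq> (v \<in> L)"
  shows "\<exists>j < length Ps. (u \<in> Ps ! j) \<noteq> (v \<in> Ps ! j)"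
proof (rule ccontr)
  obtain f where f: "\<And>x. (x \<in> L) = f (map (\<lambda>P. x \<in> P) Ps)"
    using assms(1) unfolding bool_comb_def by blast
  assume "\<not> ?thesis"
  then have "map (\<lambda>P. u \<in> P) Ps = map (\<lambda>P. v \<in> P) Ps"
    by (simp add: list_eq_iff_nth_eq)
  then show False using assms(2) f by metis
qed

lemma alt_le_length_if_bool_comb:
  assumes ideals: "\<forall>P\<in>set Ps. left_ideal P" and comb: "bool_comb Ps L"
  shows "alt L x \<le> length Ps"
proof -
  let ?A = "{i. i < length x \<and> (drop i x \<in> L) \<noteq> (drop (Suc i) x \<in> L)}"
  have "\<forall>i\<in>?A. \<exists>j. j < length Ps \<and> (drop i x \<in> Ps ! j) \<noteq> (drop (Suc i) x \<in> Ps ! j)"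
    by (intro ballI) (use bool_comb_separates[OF comb] in simp)
  from bchoice[OF this] obtain J where "\<forall>i\<in>?A.
      J i < length Ps \<and> (drop i x \<in> Ps ! J i) \<noteq> (drop (Suc i) x \<in> Ps ! J i)"
    by blast
  then have J: "J i < length Ps \<and> (drop i x \<in> Ps ! J i) \<noteq> (drop (Suc i) x \<in> Ps ! J i)"
    if "i \<in> ?A" for i
    using that by blast
  have ideal: "left_ideal (Ps ! J i)" if "i \<in> ?A" for i
    using ideals J[OF that] by simp
  have exit: "drop i x \<in> Ps ! J i \<and> drop (Suc i) x \<notin> Ps ! J i" if "i \<in> ?A" for i
    using J[OF that] left_ideal_drop_mono[OF ideal[OF that], of "Suc i" x i] by auto
  have "inj_on J ?A"
  proof (rule inj_onI)
    fix i i' assume i: "i \<in> ?A" and i': "i' \<in> ?A" and same: "J i = J i'"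
    show "i = i'"
      using exit[OF i] exit[OF i'] unfolding same
      by (intro left_ideal_exit_unique[OF ideal[OF i'], of i x i']) auto
  qed
  then have "card ?A \<le> card {..<length Ps}"
    by (rule card_inj_on_le) (use J in auto)
  then show ?thesis unfolding alt_def by simp
qed

definition left_quotient :: "'a list \<Rightarrow> 'a list set \<Rightarrow> 'a list set" where
  "left_quotient p L = {w. p @ w \<in> L}"

lemma finite_left_quotients_if_regular:
  assumes "regular L"
  shows "finite (range (\<lambda>p. left_quotient p L))"
proof -
  obtain Q :: "nat set" and \<delta> q0 F where
    dfa: "finite Q" "q0 \<in> Q" "\<forall>q\<in>Q. \<forall>a. \<delta> q a \<in> Q" "L = {w. foldl \<delta> q0 w \<in> F}"
    using assms unfolding regular_def by blast
  have run_in_Q: "foldl \<delta> q w \<in> Q" if "q \<in> Q" for q w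
    using that by (induction w arbitrary: q) (use dfa(3) in auto)
  have "left_quotient p L = {w. foldl \<delta> (foldl \<delta> q0 p) w \<in> F}" for p
    by (simp add: left_quotient_def dfa(4))
  then have "range (\<lambda>p. left_quotient p L) \<subseteq> (\<lambda>q. {w. foldl \<delta> q w \<in> F}) ` Q"
    using run_in_Q[OF dfa(2)] by blast
  then show ?thesis using dfa(1) finite_subset by blast
qed

lemma regular_if_finite_left_quotients:
  fixes L :: "('a::finite) list set"
  assumes "finite (range (\<lambda>p. left_quotient p L))"
  shows "regular L"
proof -
  define R where "R = range (\<lambda>p. left_quotient p L)"
  obtain e and n :: nat where e: "e ` R = {i. i < n}" "inj_on e R"
    using finite_imp_inj_to_nat_seg[OF assms] unfolding R_def by blast
  have in_R: "left_quotient p L \<in> R" for p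
    unfolding R_def by simp
  define \<delta> where "\<delta> q a = e (left_quotient [a] (inv_into R e q))" for q a
  have step: "\<delta> (e (left_quotient p L)) a = e (left_quotient (p @ [a]) L)" for p a
    using e(2) in_R by (simp add: \<delta>_def left_quotient_def)
  have run: "foldl \<delta> (e (left_quotient [] L)) w = e (left_quotient w L)" for w
    by (induction w rule: rev_induct) (simp_all add: step)
  define F where "F = e ` {S \<in> R. [] \<in> S}"
  have accept: "w \<in> L \<longleftrightarrow> e (left_quotient w L) \<in> F" for w
  proof -
    have "w \<in> L \<longleftrightarrow> [] \<in> left_quotient w L"
      by (simp add: left_quotient_def)
    also have "\<dots> \<longleftrightarrow> e (left_quotient w L) \<in> F"
      unfolding F_def using e(2) in_R[of w] by (auto dest: inj_onD)
    finally show ?thesis .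
  qed
  have closed: "\<forall>q\<in>{i. i < n}. \<forall>a. \<delta> q a \<in> {i. i < n}"
  proof (intro ballI allI)
    fix q a assume "q \<in> {i. i < n}"
    then have "q \<in> e ` R" using e(1) by simp
    then obtain p where "q = e (left_quotient p L)"
      unfolding R_def by blast
    then show "\<delta> q a \<in> {i. i < n}" using step e(1) in_R by auto
  qed
  have "L = {w. foldl \<delta> (e (left_quotient [] L)) w \<in> F}"
    using accept run by auto
  moreover have "e (left_quotient [] L) \<in> {i. i < n}" "F \<subseteq> {i. i < n}"
    using e(1) in_R unfolding F_def by auto
  ultimately show ?thesis
    unfolding regular_def using closed by blast
qed

lemma regular_iff_finite_left_quotients:
  "regular (L :: ('a::finite) list set) \<longleftrightarrow> finite (range (\<lambda>p. left_quotient p L))"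
  using finite_left_quotients_if_regular regular_if_finite_left_quotients by blast

definition alt_level :: "'a list set \<Rightarrow> nat \<Rightarrow> 'a list set" where
  "alt_level L j = {x. j \<le> alt L x}"

lemma left_ideal_alt_level: "left_ideal (alt_level L j)"
  unfolding left_ideal_def alt_level_def by (auto simp: alt_append)

lemma regular_alt_level:
  fixes L :: "('a::finite) list set"
  assumes "regular L"
  shows "regular (alt_level L j)"
  unfolding regular_iff_finite_left_quotients
proof -
  define QL where "QL = range (\<lambda>u. left_quotient u L)"
  have "finite QL"
    unfolding QL_def using assms by (simp add: regular_iff_finite_left_quotients)
  define \<sigma> where "\<sigma> w = {T \<in> QL. w \<in> T}" for w
  have "finite (range \<sigma>)"
    by (rule finite_subset[of _ "Pow QL"]) (use \<open>finite QL\<close> in \<open>auto simp: \<sigma>_def\<close>)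
  \<comment> \<open>\<open>alt_within L p w\<close> only depends on \<open>\<sigma> w\<close>, and only its value capped at \<open>j\<close> matters.\<close>
  define H where "H p S = (if S \<in> range \<sigma> then
      min j (card {i. i < length p \<and>
        (left_quotient (drop i p) L \<in> S) \<noteq> (left_quotient (drop (Suc i) p) L \<in> S)})
      else undefined)" for p S
  have capped: "min j (alt_within L p w) = H p (\<sigma> w)" for p w
    unfolding H_def alt_within_def \<sigma>_def QL_def left_quotient_def by auto
  define Hs where "Hs = {h. \<forall>S. (S \<in> range \<sigma> \<longrightarrow> h S \<in> {..j}) \<and> (S \<notin> range \<sigma> \<longrightarrow> h S = undefined)}"
  have "finite Hs"
    unfolding Hs_def by (rule finite_set_of_finite_funs[OF \<open>finite (range \<sigma>)\<close>]) simp
  moreover have "H p \<in> Hs" for p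
    unfolding Hs_def H_def by auto
  moreover have "left_quotient p (alt_level L j) = {w. j \<le> alt L w + H p (\<sigma> w)}" for p
    unfolding left_quotient_def alt_level_def capped[symmetric] by (auto simp: alt_append)
  ultimately have "range (\<lambda>p. left_quotient p (alt_level L j))
                     \<subseteq> (\<lambda>h. {w. j \<le> alt L w + h (\<sigma> w)}) ` Hs"
    by auto
  then show "finite (range (\<lambda>p. left_quotient p (alt_level L j)))"
    using \<open>finite Hs\<close> finite_subset by blast
qed

lemma bool_comb_alt_levels:
  assumes bound: "\<forall>x. alt L x \<le> k"
  shows "bool_comb (map (alt_level L) [1..<Suc k]) L"
  unfolding bool_comb_def
proof (intro exI allI)
  fix x
  let ?Ps = "map (alt_level L) [1..<Suc k]"
  have "length (filter id (map (\<lambda>P. x \<in> P) ?Ps))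
          = card ({j. j \<le> alt L x} \<inter> set [1..<Suc k])"
    by (simp add: filter_map comp_def alt_level_def distinct_length_filter)
  also have "{j. j \<le> alt L x} \<inter> set [1..<Suc k] = {1..alt L x}"
    using bound[rule_format, of x] by auto
  also have "card {1..alt L x} = alt L x"
    by simp
  finally have "length (filter id (map (\<lambda>P. x \<in> P) ?Ps)) = alt L x" .
  then show "(x \<in> L) = (\<lambda>bs. ([] \<in> L) \<noteq> odd (length (filter id bs))) (map (\<lambda>P. x \<in> P) ?Ps)"
    using mem_iff_odd_alt[of x L] by (simp only:)
qed

theorem lemma5p12:
  fixes L :: "('a::finite) list set" and k :: nat
  assumes "regular L"
  shows "(\<exists>Ps. length Ps \<le> k \<and> (\<forall>P\<in>set Ps. regular P \<and> left_ideal P) \<and> bool_comb Ps L)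
         \<longleftrightarrow> (\<forall>x. alt L x \<le> k)"
proof
  assume "\<exists>Ps. length Ps \<le> k \<and> (\<forall>P\<in>set Ps. regular P \<and> left_ideal P) \<and> bool_comb Ps L"
  then obtain Ps where "length Ps \<le> k" "\<forall>P\<in>set Ps. left_ideal P" "bool_comb Ps L"
    by blast
  then show "\<forall>x. alt L x \<le> k"
    using alt_le_length_if_bool_comb le_trans by blast
next
  assume "\<forall>x. alt L x \<le> k"
  then have "bool_comb (map (alt_level L) [1..<Suc k]) L"
    by (rule bool_comb_alt_levels)
  moreover have "\<forall>P\<in>set (map (alt_level L) [1..<Suc k]). regular P \<and> left_ideal P"
    using regular_alt_level[OF assms] left_ideal_alt_level by auto
  ultimately show "\<exists>Ps. length Ps \<le> k \<and> (\<forall>P\<in>set Ps. regular P \<and> left_ideal P) \<and> bool_comb Ps L"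
    by (intro exI[of _ "map (alt_level L) [1..<Suc k]"]) simp
qed

end
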